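(* Let $\mathscr{H}$ be a $d$-dimensional complex Hilbert space and let $A=\{|a_j\rangle\}_{j=1}^{d}$ and $B=\{|b_k\rangle\}_{k=1}^{d}$ be two orthonormal bases of $\mathscr{H}$. Let $(A,B)$ denote the $d\times 2d$ matrix whose columns are $|a_1\rangle,\dots,|a_d\rangle,|b_1\rangle,\dots,|b_d\rangle$ (written in some fixed basis of $\mathscr{H}$). Then, for $s\in\{2,\dots,d+1\}$, the bases $A$ and $B$ are $s$-order incompatible if and only if $\operatorname{spark}(A,B)=s$.
   Context: Two orthonormal bases $A$ and $B$ of $\mathscr{H}$ are called $s$-order incompatible, for an integer $s\in\{2,\dots,d+1\}$, if: (1) for all nonempty subsets $S_A\subseteq A$ and $S_B\subseteq B$ with $|S_A|+|S_B|<s$ one has $\operatorname{span}(S_A)\cap\operatorname{span}(S_B)=\{0\}$; and (2) there exist subsets $S_A\subseteq A$, $S_B\subseteq B$ with $|S_A|+|S_B|=s$ such that $\operatorname{span}(S_A)\cap\operatorname{span}(S_B)\neq\{0\}$. Spans are over $\mathbb{C}$. The spark of a matrix $M$ is the smallest integer $k$ such that some set of $k$ columns of $M$ is linearly dependent. *)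

theory Defs
  imports "HOL-Analysis.Analysis"
begin

text \<open>The d-dimensional complex Hilbert space is modelled as complex^'n with CARD('n) = d,
  equipped with the standard Hermitian inner product (linear in the first argument).
  Spans are complex spans, via the library interpretation vec of scalar multiplication (*s).\<close>

definition cinner :: "complex^'n \<Rightarrow> complex^'n \<Rightarrow> complex" where
  "cinner x y = (\<Sum>i\<in>UNIV. x $ i * cnj (y $ i))"

definition orthonormal_basis :: "('n::finite \<Rightarrow> complex^'n) \<Rightarrow> bool" where
  "orthonormal_basis a \<longleftrightarrow> (\<forall>j k. cinner (a j) (a k) = (if j = k then 1 else 0))"

definition s_order_incompatible ::
  "nat \<Rightarrow> ('n::finite \<Rightarrow> complex^'n) \<Rightarrow> ('n \<Rightarrow> complex^'n) \<Rightarrow> bool" where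
  "s_order_incompatible s a b \<longleftrightarrow>
     (\<forall>SA SB. SA \<noteq> {} \<and> SB \<noteq> {} \<and> card SA + card SB < s \<longrightarrow>
        vec.span (a ` SA) \<inter> vec.span (b ` SB) = {0}) \<and>
     (\<exists>SA SB. card SA + card SB = s \<and>
        vec.span (a ` SA) \<inter> vec.span (b ` SB) \<noteq> {0})"

text \<open>A set S of column indices of M gives linearly dependent columns (as a family,
  so repeated columns count as dependent).\<close>
definition columns_dependent :: "'a::field^'c::finite^'r \<Rightarrow> 'c set \<Rightarrow> bool" where
  "columns_dependent M S \<longleftrightarrow>
     (\<exists>c. (\<Sum>j\<in>S. c j *s column j M) = 0 \<and> (\<exists>j\<in>S. c j \<noteq> 0))"

definition spark :: "'a::field^'c::finite^'r \<Rightarrow> nat" where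
  "spark M = (LEAST k. \<exists>S. card S = k \<and> columns_dependent M S)"

definition AB_matrix ::
  "('n::finite \<Rightarrow> complex^'n) \<Rightarrow> ('n \<Rightarrow> complex^'n) \<Rightarrow> complex^('n + 'n)^'n" where
  "AB_matrix a b = (\<chi> i. \<chi> j. case j of Inl p \<Rightarrow> a p $ i | Inr q \<Rightarrow> b q $ i)"

end

theory Submission
  imports Defs
begin

(* A vanishing linear combination of the columns of (A,B) splits as v + w = 0 with v its A-part
  and w its B-part, so v lies in span(S_A) \<inter> span(S_B); v is nonzero because orthonormal
  vectors are linearly independent. Conversely a nonzero vector of span(S_A) \<inter> span(S_B) gives
  such a combination supported on S_A \<union> S_B. Hence the sizes of dependent column sets are
  exactly the numbers |S_A| + |S_B| for which the spans meet nontrivially, and "spark = s" and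
  "s-order incompatible" both say that s is the least of them. The spark is well defined because
  2d columns in a d-dimensional space are dependent. *)

lemma Plus_vimage_Inl_Inr: "Inl -` S <+> Inr -` S = S"
proof (rule set_eqI)
  show "x \<in> Inl -` S <+> Inr -` S \<longleftrightarrow> x \<in> S" for x
    by (cases x) auto
qed

lemma ex_set_Plus_iff: "(\<exists>S. P S) \<longleftrightarrow> (\<exists>A B. P (A <+> B))"
proof
  assume "\<exists>S. P S"
  then obtain S where "P S" ..
  then have "P (Inl -` S <+> Inr -` S)"
    by (simp only: Plus_vimage_Inl_Inr)
  then show "\<exists>A B. P (A <+> B)" by blast
qed blast

lemma all_set_Plus_iff: "(\<forall>S. P S) \<longleftrightarrow> (\<forall>A B. P (A <+> B))"
  using ex_set_Plus_iff[of "\<lambda>S. \<not> P S"] by blast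

lemma columns_dependent_UNIV_if_card_less:
  fixes M :: "'a::field^'c::finite^'r::finite"
  assumes "CARD('r) < CARD('c)"
  shows "columns_dependent M UNIV"
proof -
  have "\<not> inj ((*v) M)"
  proof
    assume "inj ((*v) M)"
    then have "vec.dim (range ((*v) M)) = CARD('c)"
      using vec.dim_image_eq[OF matrix_vector_mul_linear_gen, of M UNIV]
      by (simp add: card_cart_basis)
    moreover have "vec.dim (range ((*v) M)) \<le> CARD('r)"
      using vec.dim_subset_UNIV[of "range ((*v) M)"]
      by (simp add: vec.dimension_def card_cart_basis)
    ultimately show False using assms by simp
  qed
  then obtain x where "x \<noteq> 0" "M *v x = 0"
    using vec.linear_inj_iff_eq_0[OF matrix_vector_mul_linear_gen] by blast
  then have "(\<Sum>j\<in>UNIV. x $ j *s column j M) = 0" and "\<exists>j\<in>UNIV. x $ j \<noteq> 0"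
    by (simp_all add: matrix_mult_sum [symmetric] vec_eq_iff)
  then show ?thesis
    unfolding columns_dependent_def by blast
qed

lemma spark_eq_iff:
  assumes "columns_dependent M S\<^sub>0"
  shows "spark M = k \<longleftrightarrow>
    (\<forall>S. columns_dependent M S \<longrightarrow> k \<le> card S) \<and> (\<exists>S. card S = k \<and> columns_dependent M S)"
proof
  assume "spark M = k"
  moreover have "\<exists>S. card S = spark M \<and> columns_dependent M S"
    unfolding spark_def by (rule LeastI_ex) (use assms in blast)
  moreover have "spark M \<le> card S" if "columns_dependent M S" for S
    unfolding spark_def by (rule Least_le) (use that in blast)
  ultimately show "(\<forall>S. columns_dependent M S \<longrightarrow> k \<le> card S) \<and>
    (\<exists>S. card S = k \<and> columns_dependent M S)" by blast
next
  assume "(\<forall>S. columns_dependent M S \<longrightarrow> k \<le> card S) \<and>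
    (\<exists>S. card S = k \<and> columns_dependent M S)"
  then show "spark M = k"
    unfolding spark_def by (intro Least_equality) auto
qed

lemma in_span_image_iff:
  fixes a :: "'i \<Rightarrow> 'a::field^'n"
  assumes "finite S" and "inj_on a S"
  shows "v \<in> vec.span (a ` S) \<longleftrightarrow> (\<exists>c. v = (\<Sum>j\<in>S. c j *s a j))"
proof
  assume "v \<in> vec.span (a ` S)"
  then obtain u where "v = (\<Sum>w\<in>a ` S. u w *s w)"
    using vec.span_finite[of "a ` S"] assms(1) by auto
  then have "v = (\<Sum>j\<in>S. u (a j) *s a j)"
    by (simp add: sum.reindex[OF assms(2)])
  then show "\<exists>c. v = (\<Sum>j\<in>S. c j *s a j)" by (rule exI[of _ "\<lambda>j. u (a j)"])
next
  assume "\<exists>c. v = (\<Sum>j\<in>S. c j *s a j)"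
  then obtain c where "v = (\<Sum>j\<in>S. c j *s a j)" ..
  moreover have "c j *s a j \<in> vec.span (a ` S)" if "j \<in> S" for j
    using that by (intro vec.span_scale vec.span_base) simp
  ultimately show "v \<in> vec.span (a ` S)"
    by (simp add: vec.span_sum)
qed

lemma cinner_sum_left:
  "cinner (\<Sum>j\<in>S. c j *s x j) y = (\<Sum>j\<in>S. c j * cinner (x j) y)"
proof -
  have "cinner (\<Sum>j\<in>S. c j *s x j) y = (\<Sum>i\<in>UNIV. \<Sum>j\<in>S. c j * x j $ i * cnj (y $ i))"
    unfolding cinner_def by (simp add: sum_distrib_right)
  also have "\<dots> = (\<Sum>j\<in>S. \<Sum>i\<in>UNIV. c j * (x j $ i * cnj (y $ i)))"
    by (subst sum.swap) (simp add: mult.assoc)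
  also have "\<dots> = (\<Sum>j\<in>S. c j * cinner (x j) y)"
    unfolding cinner_def by (simp add: sum_distrib_left)
  finally show ?thesis .
qed

lemma orthonormal_basis_sum_eq_0D:
  assumes "orthonormal_basis a" and "(\<Sum>j\<in>S. c j *s a j) = 0" and "k \<in> S"
  shows "c k = 0"
proof -
  have "0 = cinner (\<Sum>j\<in>S. c j *s a j) (a k)"
    using assms(2) by (simp add: cinner_def)
  also have "\<dots> = (\<Sum>j\<in>S. c j * (if j = k then 1 else 0))"
    using assms(1) unfolding cinner_sum_left orthonormal_basis_def by simp
  also have "\<dots> = c k"
    using assms(3) by (simp add: if_distrib cong: if_cong)
  finally show ?thesis by simp
qed

lemma orthonormal_basis_inj:
  assumes "orthonormal_basis a"
  shows "inj a"
proof (rule injI)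
  fix j k assume "a j = a k"
  then have "cinner (a j) (a k) = cinner (a j) (a j)" by simp
  then show "j = k"
    using assms unfolding orthonormal_basis_def by (metis zero_neq_one)
qed

lemma column_AB_matrix [simp]:
  "column (Inl p) (AB_matrix a b) = a p"
  "column (Inr q) (AB_matrix a b) = b q"
  by (simp_all add: column_def AB_matrix_def vec_eq_iff)

lemma in_span_orthonormal_basis_iff:
  assumes "orthonormal_basis a"
  shows "v \<in> vec.span (a ` S) \<longleftrightarrow> (\<exists>c. v = (\<Sum>j\<in>S. c j *s a j))"
  using orthonormal_basis_inj[OF assms] by (intro in_span_image_iff) (auto intro: inj_on_subset)

lemma sum_columns_AB_matrix_Plus:
  "(\<Sum>j\<in>S\<^sub>A <+> S\<^sub>B. c j *s column j (AB_matrix a b)) =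
    (\<Sum>p\<in>S\<^sub>A. c (Inl p) *s a p) + (\<Sum>q\<in>S\<^sub>B. c (Inr q) *s b q)"
  by (simp add: sum.Plus o_def)

lemma span_inter_nontrivial_if_columns_dependent:
  assumes a: "orthonormal_basis a" and b: "orthonormal_basis b"
    and "columns_dependent (AB_matrix a b) (S\<^sub>A <+> S\<^sub>B)"
  shows "vec.span (a ` S\<^sub>A) \<inter> vec.span (b ` S\<^sub>B) \<noteq> {0}"
proof -
  obtain c where rel: "(\<Sum>p\<in>S\<^sub>A. c (Inl p) *s a p) + (\<Sum>q\<in>S\<^sub>B. c (Inr q) *s b q) = 0"
    and nz: "\<exists>j\<in>S\<^sub>A <+> S\<^sub>B. c j \<noteq> 0"
    using assms(3) unfolding columns_dependent_def sum_columns_AB_matrix_Plus by blast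
  define v where "v = (\<Sum>p\<in>S\<^sub>A. c (Inl p) *s a p)"
  have v_as_b: "v = (\<Sum>q\<in>S\<^sub>B. (- c (Inr q)) *s b q)"
    using rel unfolding v_def by (simp add: eq_neg_iff_add_eq_0 [symmetric] sum_negf)
  have "v \<noteq> 0"
  proof
    assume "v = 0"
    then have A0: "(\<Sum>p\<in>S\<^sub>A. c (Inl p) *s a p) = 0"
      and B0: "(\<Sum>q\<in>S\<^sub>B. (- c (Inr q)) *s b q) = 0"
      using v_def v_as_b by simp_all
    have "c (Inl p) = 0" if "p \<in> S\<^sub>A" for p
      using orthonormal_basis_sum_eq_0D[OF a A0 that] .
    moreover have "c (Inr q) = 0" if "q \<in> S\<^sub>B" for q
      using orthonormal_basis_sum_eq_0D[OF b B0 that] by simp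
    ultimately show False
      using nz by blast
  qed
  moreover have "v \<in> vec.span (a ` S\<^sub>A)"
    unfolding in_span_orthonormal_basis_iff[OF a] v_def
    by (rule exI[of _ "\<lambda>p. c (Inl p)"]) (rule refl)
  moreover have "v \<in> vec.span (b ` S\<^sub>B)"
    unfolding in_span_orthonormal_basis_iff[OF b] v_as_b
    by (rule exI[of _ "\<lambda>q. - c (Inr q)"]) (rule refl)
  ultimately show ?thesis
    by blast
qed

lemma columns_dependent_if_span_inter_nontrivial:
  assumes a: "orthonormal_basis a" and b: "orthonormal_basis b"
    and "vec.span (a ` S\<^sub>A) \<inter> vec.span (b ` S\<^sub>B) \<noteq> {0}"
  shows "columns_dependent (AB_matrix a b) (S\<^sub>A <+> S\<^sub>B)"
proof -
  obtain v where "v \<noteq> 0" "v \<in> vec.span (a ` S\<^sub>A)" "v \<in> vec.span (b ` S\<^sub>B)"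
    using assms(3) vec.span_zero by blast
  then obtain c d where c: "v = (\<Sum>p\<in>S\<^sub>A. c p *s a p)" and d: "v = (\<Sum>q\<in>S\<^sub>B. d q *s b q)"
    unfolding in_span_orthonormal_basis_iff[OF a] in_span_orthonormal_basis_iff[OF b] by blast
  define f where "f = case_sum c (\<lambda>q. - d q)"
  have "(\<Sum>j\<in>S\<^sub>A <+> S\<^sub>B. f j *s column j (AB_matrix a b)) =
      (\<Sum>p\<in>S\<^sub>A. c p *s a p) - (\<Sum>q\<in>S\<^sub>B. d q *s b q)"
    unfolding sum_columns_AB_matrix_Plus f_def by (simp add: sum_negf)
  then have "(\<Sum>j\<in>S\<^sub>A <+> S\<^sub>B. f j *s column j (AB_matrix a b)) = 0"
    using c d by simp
  moreover have "\<exists>p\<in>S\<^sub>A. c p \<noteq> 0"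
  proof (rule ccontr)
    assume "\<not> ?thesis"
    then have "v = 0" unfolding c by simp
    with \<open>v \<noteq> 0\<close> show False ..
  qed
  then obtain p where "p \<in> S\<^sub>A" "c p \<noteq> 0" ..
  then have "\<exists>j\<in>S\<^sub>A <+> S\<^sub>B. f j \<noteq> 0"
    by (intro bexI[of _ "Inl p"]) (auto simp: f_def)
  ultimately show ?thesis
    unfolding columns_dependent_def by blast
qed

lemma columns_dependent_AB_matrix_Plus_iff:
  assumes "orthonormal_basis a" and "orthonormal_basis b"
  shows "columns_dependent (AB_matrix a b) (S\<^sub>A <+> S\<^sub>B) \<longleftrightarrow>
    vec.span (a ` S\<^sub>A) \<inter> vec.span (b ` S\<^sub>B) \<noteq> {0}"
  using span_inter_nontrivial_if_columns_dependent[OF assms]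
    columns_dependent_if_span_inter_nontrivial[OF assms] by blast

lemma s_order_incompatible_iff:
  "s_order_incompatible s a b \<longleftrightarrow>
    (\<forall>S\<^sub>A S\<^sub>B. vec.span (a ` S\<^sub>A) \<inter> vec.span (b ` S\<^sub>B) \<noteq> {0} \<longrightarrow> s \<le> card S\<^sub>A + card S\<^sub>B) \<and>
    (\<exists>S\<^sub>A S\<^sub>B. card S\<^sub>A + card S\<^sub>B = s \<and> vec.span (a ` S\<^sub>A) \<inter> vec.span (b ` S\<^sub>B) \<noteq> {0})"
proof -
  have nonempty: "S\<^sub>A \<noteq> {} \<and> S\<^sub>B \<noteq> {}"
    if "vec.span (a ` S\<^sub>A) \<inter> vec.span (b ` S\<^sub>B) \<noteq> {0}" for S\<^sub>A S\<^sub>B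
    using that by (auto simp: vec.span_zero)
  show ?thesis
    unfolding s_order_incompatible_def
    by (intro conj_cong refl) (use nonempty in \<open>meson not_le\<close>)
qed

theorem mainTheorem1:
  fixes a b :: "'n::finite \<Rightarrow> complex^'n" and s :: nat
  assumes "orthonormal_basis a" and "orthonormal_basis b"
    and "2 \<le> s" and "s \<le> CARD('n) + 1"
  shows "s_order_incompatible s a b \<longleftrightarrow> spark (AB_matrix a b) = s"
proof -
  let ?M = "AB_matrix a b"
  have "columns_dependent ?M UNIV"
    by (rule columns_dependent_UNIV_if_card_less) simp
  then have "spark ?M = s \<longleftrightarrow>
      (\<forall>S. columns_dependent ?M S \<longrightarrow> s \<le> card S) \<and> (\<exists>S. card S = s \<and> columns_dependent ?M S)"
    by (rule spark_eq_iff)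
  also have "\<dots> \<longleftrightarrow>
      (\<forall>S\<^sub>A S\<^sub>B. columns_dependent ?M (S\<^sub>A <+> S\<^sub>B) \<longrightarrow> s \<le> card (S\<^sub>A <+> S\<^sub>B)) \<and>
      (\<exists>S\<^sub>A S\<^sub>B. card (S\<^sub>A <+> S\<^sub>B) = s \<and> columns_dependent ?M (S\<^sub>A <+> S\<^sub>B))"
    by (intro conj_cong ex_set_Plus_iff all_set_Plus_iff)
  also have "\<dots> \<longleftrightarrow> s_order_incompatible s a b"
    by (simp add: s_order_incompatible_iff card_Plus columns_dependent_AB_matrix_Plus_iff assms(1,2))
  finally show ?thesis ..
qed

end
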